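(* Let $S_0,S_1,S_2$ be pair-partitions of $[2k]$, $\lambda$ a Young diagram, and $f:[2k]\to 2\lambda$ a function with $f(i)=f(j)$ for some $i\neq j$. Let $S_0'=(i\ j)\cdot S_0$. Then (a) $f$ satisfies conditions (P0), (P1), (P2) with respect to $(S_0,S_1,S_2)$ if and only if it satisfies them with respect to $(S_0',S_1,S_2)$; (b) if these conditions are satisfied, then $(-1)^{\mathcal{L}(S_0,S_1)}+(-1)^{\mathcal{L}(S_0',S_1)}=0$.
   Context: Pair-partitions of $[2k]$ are sets of disjoint two-element subsets with union $[2k]$, identified with fixed-point-free involutions; for a permutation $\sigma$, $\sigma\cdot P$ has pair $\{\sigma(a),\sigma(b)\}$ iff $\{a,b\}\in P$, and $(i\ j)$ is the transposition. $\mathcal{L}(A,B)$ is the bipartite graph with a black vertex per pair of $A$, a white vertex per pair of $B$, and an edge for each $a\in[2k]$ joining the pairs containing $a$; it is a union of loops, $|\mathcal{L}(A,B)|$ is the number of loops and $(-1)^{\mathcal{L}(A,B)}=(-1)^{k-|\mathcal{L}(A,B)|}$. $2\lambda=(2\lambda_1,2\lambda_2,\dots)$; two boxes of $2\lambda$ are neighbors if in the same row and in columns $2m+1$, $2m+2$ for some $m\ge0$. The conditions, for all $l\in[2k]$: (P0) $f(l)$ and $f(S_0(l))$ are neighbors; (P1) $f(l)$ and $f(S_0\circ S_1(l))$ are in the same column; (P2) $f(l)$ and $f(S_2(l))$ are in the same row. *)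

theory Defs
  imports "HOL-Combinatorics.Transposition"
begin

text \<open>Pair-partitions of [2k] = {1..2k}, identified with fixed-point-free involutions
  (only the values on {1..2k} matter).\<close>
definition pair_partition :: "nat \<Rightarrow> (nat \<Rightarrow> nat) \<Rightarrow> bool" where
  "pair_partition k P \<longleftrightarrow>
     (\<forall>a\<in>{1..2*k}. P a \<in> {1..2*k} \<and> P a \<noteq> a \<and> P (P a) = a)"

text \<open>Action of a permutation: sigma.P has pair {sigma a, sigma b} iff {a,b} in P.\<close>
definition perm_act :: "(nat \<Rightarrow> nat) \<Rightarrow> (nat \<Rightarrow> nat) \<Rightarrow> (nat \<Rightarrow> nat)" where
  "perm_act \<sigma> P = \<sigma> \<circ> P \<circ> inv \<sigma>"

definition young_diagram :: "nat list \<Rightarrow> bool" where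
  "young_diagram lam \<longleftrightarrow> sorted_wrt (\<ge>) lam \<and> (\<forall>x\<in>set lam. 0 < x)"

text \<open>Boxes (row, column), 1-based, of the diagram 2 lambda.\<close>
definition boxes2 :: "nat list \<Rightarrow> (nat \<times> nat) set" where
  "boxes2 lam = {(r, c). 1 \<le> r \<and> r \<le> length lam \<and> 1 \<le> c \<and> c \<le> 2 * lam ! (r - 1)}"

definition neighbors :: "nat \<times> nat \<Rightarrow> nat \<times> nat \<Rightarrow> bool" where
  "neighbors b b' \<longleftrightarrow> fst b = fst b' \<and>
     (\<exists>m. {snd b, snd b'} = {2*m+1, 2*m+2})"

definition cond_P0 :: "nat \<Rightarrow> (nat \<Rightarrow> nat) \<Rightarrow> (nat \<Rightarrow> nat \<times> nat) \<Rightarrow> bool" where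
  "cond_P0 k S0 f \<longleftrightarrow> (\<forall>l\<in>{1..2*k}. neighbors (f l) (f (S0 l)))"

definition cond_P1 :: "nat \<Rightarrow> (nat \<Rightarrow> nat) \<Rightarrow> (nat \<Rightarrow> nat) \<Rightarrow> (nat \<Rightarrow> nat \<times> nat) \<Rightarrow> bool" where
  "cond_P1 k S0 S1 f \<longleftrightarrow> (\<forall>l\<in>{1..2*k}. snd (f l) = snd (f (S0 (S1 l))))"

definition cond_P2 :: "nat \<Rightarrow> (nat \<Rightarrow> nat) \<Rightarrow> (nat \<Rightarrow> nat \<times> nat) \<Rightarrow> bool" where
  "cond_P2 k S2 f \<longleftrightarrow> (\<forall>l\<in>{1..2*k}. fst (f l) = fst (f (S2 l)))"

definition conds :: "nat \<Rightarrow> (nat \<Rightarrow> nat) \<Rightarrow> (nat \<Rightarrow> nat) \<Rightarrow> (nat \<Rightarrow> nat) \<Rightarrow> (nat \<Rightarrow> nat \<times> nat) \<Rightarrow> bool" where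
  "conds k S0 S1 S2 f \<longleftrightarrow> cond_P0 k S0 f \<and> cond_P1 k S0 S1 f \<and> cond_P2 k S2 f"

text \<open>The bipartite graph L(A,B): black vertices Inl {a, A a}, white vertices Inr {a, B a},
  and for each a in [2k] an edge joining Inl {a, A a} and Inr {a, B a}.\<close>
definition L_vertices :: "nat \<Rightarrow> (nat \<Rightarrow> nat) \<Rightarrow> (nat \<Rightarrow> nat) \<Rightarrow> (nat set + nat set) set" where
  "L_vertices k A B = (\<lambda>a. Inl {a, A a}) ` {1..2*k} \<union> (\<lambda>a. Inr {a, B a}) ` {1..2*k}"

definition L_adj :: "nat \<Rightarrow> (nat \<Rightarrow> nat) \<Rightarrow> (nat \<Rightarrow> nat) \<Rightarrow> (nat set + nat set) rel" where
  "L_adj k A B = (\<Union>a\<in>{1..2*k}. {(Inl {a, A a}, Inr {a, B a}), (Inr {a, B a}, Inl {a, A a})})"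

definition num_loops :: "nat \<Rightarrow> (nat \<Rightarrow> nat) \<Rightarrow> (nat \<Rightarrow> nat) \<Rightarrow> nat" where
  "num_loops k A B = card (L_vertices k A B // ((L_adj k A B)\<^sup>* \<inter> (L_vertices k A B \<times> L_vertices k A B)))"

text \<open>(-1)^L(A,B) = (-1)^(k - |L(A,B)|).\<close>
definition loop_sign :: "nat \<Rightarrow> (nat \<Rightarrow> nat) \<Rightarrow> (nat \<Rightarrow> nat) \<Rightarrow> int" where
  "loop_sign k A B = (-1) ^ (k - num_loops k A B)"

end

theory Submission
  imports Defs "HOL-Combinatorics.Orbits"
begin

text \<open>Conditions (P0) and (P1) see \<open>S\<^sub>0\<close> only through \<open>f \<circ> S\<^sub>0\<close>, and since two
  neighbours of one box coincide, \<open>f i = f j\<close> forces \<open>f (S\<^sub>0 i) = f (S\<^sub>0 j)\<close>; hence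
  \<open>f \<circ> S\<^sub>0\<close> does not change under the transposition, which gives (a).

  For (b), the parity of the column of \<open>f x\<close> changes along every \<open>S\<^sub>0\<close>-pair (neighbours) and
  therefore, by (P1), along every \<open>S\<^sub>1\<close>-pair. So the points whose column has the parity of that
  of \<open>f i\<close> form a set \<open>Q\<close> meeting each pair of \<open>S\<^sub>0\<close> and of \<open>S\<^sub>1\<close> exactly once and
  containing \<open>i\<close> and \<open>j\<close>. The loops of \<open>\<L>(A,B)\<close> are the cycles of the permutation
  \<open>x \<mapsto> B (A x)\<close> of \<open>Q\<close>, and replacing \<open>A\<close> by \<open>(i j)\<cdot>A\<close> composes this permutation with
  \<open>(i j)\<close>, which merges two cycles or splits one. The number of loops changes by one and the
  two signs cancel.\<close>

section \<open>Composing a permutation with a transposition\<close>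

lemma permutation_orbit_eq_iff:
  assumes "permutation p"
  shows "orbit p x = orbit p y \<longleftrightarrow> y \<in> orbit p x"
  using assms by (metis cyclic_on_orbit' orbit_cyclic_eq3 permutation_self_in_orbit)

lemma permutation_orbit_sym:
  assumes "permutation p" "y \<in> orbit p x"
  shows "x \<in> orbit p y"
  using assms by (metis permutation_orbit_eq_iff permutation_self_in_orbit)

lemma funpow_comp_transpose:
  assumes "0 < t" and avoid: "\<And>s. 0 < s \<Longrightarrow> s < t \<Longrightarrow> (p ^^ s) j \<notin> {i, j}"
  shows "((p \<circ> transpose i j) ^^ t) i = (p ^^ t) j"
  using assms
proof (induction t)
  case (Suc t)
  show ?case
  proof (cases "t = 0")
    case False
    have IH: "((p \<circ> transpose i j) ^^ t) i = (p ^^ t) j"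
      using False Suc.prems(2) by (intro Suc.IH) auto
    have "((p \<circ> transpose i j) ^^ Suc t) i
        = (p \<circ> transpose i j) (((p \<circ> transpose i j) ^^ t) i)"
      by (rule funpow.simps(2)[THEN fun_cong, unfolded comp_apply])
    also have "\<dots> = (p \<circ> transpose i j) ((p ^^ t) j)"
      by (simp only: IH)
    also have "\<dots> = (p ^^ Suc t) j"
      using False Suc.prems(2) by simp
    finally show ?thesis .
  qed simp
qed simp

lemma orbit_subset_orbit_comp_transpose:
  assumes p: "permutation p" and i: "i \<notin> orbit p j"
  shows "orbit p j \<subseteq> orbit (p \<circ> transpose i j) i"
proof
  define n where "n = funpow_dist1 p j j"
  have jj: "j \<in> orbit p j" using permutation_self_in_orbit[OF p] .
  have pn: "(p ^^ n) j = j" unfolding n_def using funpow_dist1_prop[OF jj] .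
  have n0: "0 < n" unfolding n_def by simp
  have walk: "((p \<circ> transpose i j) ^^ s) i = (p ^^ s) j" if "0 < s" "s \<le> n" for s
    using that(1) proof (rule funpow_comp_transpose)
    fix r assume "0 < r" "r < s"
    then show "(p ^^ r) j \<notin> {i, j}"
      using that funpow_dist1_least[of r p j j] i unfolding n_def orbit_altdef by auto
  qed
  fix y assume "y \<in> orbit p j"
  then obtain m where m: "y = (p ^^ m) j" "m < n"
    using orbit_altdef_bounded[OF pn n0] by auto
  then have "y = ((p \<circ> transpose i j) ^^ (if m = 0 then n else m)) i"
    using walk pn n0 by auto
  then show "y \<in> orbit (p \<circ> transpose i j) i"
    unfolding orbit_altdef using n0 by auto
qed

lemma orbit_comp_transpose_merge:
  assumes p: "permutation p" and j: "j \<notin> orbit p i"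
  shows "orbit (p \<circ> transpose i j) i = orbit p i \<union> orbit p j"
proof
  let ?q = "p \<circ> transpose i j"
  have q: "permutation ?q" by (simp add: p permutation_compose permutation_swap_id)
  have i: "i \<notin> orbit p j" using j permutation_orbit_sym[OF p] by blast
  have ji: "orbit p j \<subseteq> orbit ?q i" by (rule orbit_subset_orbit_comp_transpose[OF p i])
  have "orbit p i \<subseteq> orbit (p \<circ> transpose j i) j" by (rule orbit_subset_orbit_comp_transpose[OF p j])
  also have "\<dots> = orbit ?q j" by (simp only: transpose_commute)
  also have "\<dots> = orbit ?q i"
    using ji permutation_self_in_orbit[OF p, of j] permutation_orbit_eq_iff[OF q, of i j] by blast
  finally show "orbit p i \<union> orbit p j \<subseteq> orbit ?q i" using ji by blast
  show "orbit ?q i \<subseteq> orbit p i \<union> orbit p j"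
  proof
    fix y assume "y \<in> orbit ?q i"
    then show "y \<in> orbit p i \<union> orbit p j"
    proof induction
      case base
      show ?case by (simp add: orbit.base)
    next
      case (step y)
      have "transpose i j y \<in> orbit p i \<union> orbit p j"
        using step.IH permutation_self_in_orbit[OF p, of i] permutation_self_in_orbit[OF p, of j]
        by (cases "y = i \<or> y = j") auto
      then show ?case by (auto simp only: comp_apply Un_iff intro: orbit.step)
    qed
  qed
qed

lemma orbit_comp_transpose_split:
  assumes p: "permutation p" and j: "j \<in> orbit p i" and "i \<noteq> j"
  shows "j \<notin> orbit (p \<circ> transpose i j) i"
proof -
  have i: "i \<in> orbit p j" using permutation_orbit_sym[OF p j] .
  define n where "n = funpow_dist1 p j i"
  have avoid: "(p ^^ s) j \<notin> {i, j}" if "0 < s" "s < n" for s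
    using that funpow_dist1_least[of s p j i] funpow_neq_less_funpow_dist1[OF i, of 0 s]
    unfolding n_def by auto
  have walk: "((p \<circ> transpose i j) ^^ s) i = (p ^^ s) j" if "0 < s" "s \<le> n" for s
    using that(1) by (rule funpow_comp_transpose) (use that avoid in auto)
  have "((p \<circ> transpose i j) ^^ n) i = i"
    using walk[of n] funpow_dist1_prop[OF i] unfolding n_def by simp
  then have orbit: "orbit (p \<circ> transpose i j) i = {((p \<circ> transpose i j) ^^ m) i | m. m < n}"
    by (rule orbit_altdef_bounded) (simp add: n_def)
  have neq: "((p \<circ> transpose i j) ^^ m) i \<noteq> j" if "m < n" for m
  proof (cases "m = 0")
    case False
    have "((p \<circ> transpose i j) ^^ m) i = (p ^^ m) j" using False that by (intro walk) simp_all
    moreover have "(p ^^ m) j \<noteq> j" using False that avoid by blast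
    ultimately show ?thesis by simp
  qed (use \<open>i \<noteq> j\<close> in simp)
  show ?thesis
  proof
    assume "j \<in> orbit (p \<circ> transpose i j) i"
    then obtain m where "j = ((p \<circ> transpose i j) ^^ m) i" "m < n"
      unfolding orbit mem_Collect_eq by (elim exE conjE)
    then show False using neq[of m] by argo
  qed
qed

lemma orbit_comp_transpose_outside:
  assumes p: "permutation p" and "i \<notin> orbit p x" "j \<notin> orbit p x"
  shows "orbit (p \<circ> transpose i j) x = orbit p x"
proof (rule orbit_cong[OF permutation_self_in_orbit[OF p]])
  fix s assume "s \<in> orbit p x"
  then have "s \<noteq> i" "s \<noteq> j" using assms by auto
  then show "(p \<circ> transpose i j) s = p s" by simp
qed

lemma card_orbits_comp_transpose_merge:
  assumes S: "p permutes S" "finite S" and "i \<in> S" "j \<in> S" and j: "j \<notin> orbit p i"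
  shows "card (orbit (p \<circ> transpose i j) ` S) + 1 = card (orbit p ` S)"
proof -
  let ?q = "p \<circ> transpose i j"
  have p: "permutation p" using S permutation_permutes by blast
  have q: "permutation ?q" by (simp add: p permutation_compose permutation_swap_id)
  define Oi Oj R where "Oi = orbit p i" and "Oj = orbit p j" and "R = orbit p ` S - {Oi, Oj}"
  have merged: "orbit ?q i = Oi \<union> Oj"
    unfolding Oi_def Oj_def by (rule orbit_comp_transpose_merge[OF p j])
  have self: "x \<in> orbit p x" for x by (rule permutation_self_in_orbit[OF p])
  have same_orbit: "orbit p x = orbit p y" if "x \<in> orbit p y" for x y
    using that permutation_orbit_eq_iff[OF p] by metis
  have inside: "orbit ?q x = Oi \<union> Oj" if "x \<in> Oi \<union> Oj" for x
    using that merged permutation_orbit_eq_iff[OF q, of i x] by simp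
  have outside: "orbit ?q x = orbit p x" "orbit p x \<in> R" if "x \<in> S" "x \<notin> Oi \<union> Oj" for x
  proof -
    have "i \<notin> orbit p x" "j \<notin> orbit p x"
      using that permutation_orbit_sym[OF p] unfolding Oi_def Oj_def by blast+
    then show "orbit ?q x = orbit p x" by (rule orbit_comp_transpose_outside[OF p])
    show "orbit p x \<in> R" using that self[of x] unfolding R_def by auto
  qed
  have "orbit ?q ` S = insert (Oi \<union> Oj) R"
  proof (intro equalityI subsetI)
    fix C assume "C \<in> orbit ?q ` S"
    then obtain x where "x \<in> S" "C = orbit ?q x" by blast
    then show "C \<in> insert (Oi \<union> Oj) R"
      using inside[of x] outside[of x] by (cases "x \<in> Oi \<union> Oj") simp_all
  next
    fix C assume C: "C \<in> insert (Oi \<union> Oj) R"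
    show "C \<in> orbit ?q ` S"
    proof (cases "C = Oi \<union> Oj")
      case True
      then show ?thesis using merged \<open>i \<in> S\<close> by blast
    next
      case False
      then obtain x where x: "x \<in> S" "C = orbit p x" "C \<noteq> Oi" "C \<noteq> Oj"
        using C unfolding R_def by blast
      then have "x \<notin> Oi \<union> Oj" using same_orbit unfolding Oi_def Oj_def by blast
      then show ?thesis using x outside by (metis image_eqI)
    qed
  qed
  moreover have "Oi \<union> Oj \<notin> R"
    using same_orbit self unfolding R_def Oi_def by blast
  moreover have "orbit p ` S = insert Oi (insert Oj R)"
    using \<open>i \<in> S\<close> \<open>j \<in> S\<close> unfolding R_def Oi_def Oj_def by blast
  moreover have "Oi \<noteq> Oj" using j self[of j] unfolding Oi_def Oj_def by blast
  moreover have "Oi \<notin> R" "Oj \<notin> R" unfolding R_def by auto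
  moreover have "finite R" using S unfolding R_def by simp
  ultimately show ?thesis by simp
qed

lemma card_orbits_comp_transpose:
  assumes S: "p permutes S" "finite S" and "i \<in> S" "j \<in> S" "i \<noteq> j"
  shows "card (orbit (p \<circ> transpose i j) ` S) + 1 = card (orbit p ` S) \<or>
         card (orbit p ` S) + 1 = card (orbit (p \<circ> transpose i j) ` S)"
proof (cases "j \<in> orbit p i")
  case False
  then show ?thesis using card_orbits_comp_transpose_merge[OF S \<open>i \<in> S\<close> \<open>j \<in> S\<close>] by simp
next
  case True
  have p: "permutation p" using S permutation_permutes by blast
  have "(p \<circ> transpose i j) permutes S"
    using permutes_compose[OF permutes_swap_id[OF \<open>i \<in> S\<close> \<open>j \<in> S\<close>] S(1)] .
  from card_orbits_comp_transpose_merge[OF this S(2) \<open>i \<in> S\<close> \<open>j \<in> S\<close>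
      orbit_comp_transpose_split[OF p True \<open>i \<noteq> j\<close>]]
  show ?thesis by (simp add: comp_assoc)
qed

section \<open>Pair partitions and transversals\<close>

lemma pair_partitionD:
  assumes "pair_partition k P" and "x \<in> {1..2*k}"
  shows "P x \<in> {1..2*k}" and "P (P x) = x" and "P x \<noteq> x"
  using assms unfolding pair_partition_def by auto

lemma pair_partition_perm_act:
  assumes P: "pair_partition k P" and \<sigma>: "\<sigma> permutes {1..2*k}"
  shows "pair_partition k (perm_act \<sigma> P)"
  unfolding pair_partition_def
proof
  fix a assume a: "a \<in> {1..2*k}"
  define b where "b = inv \<sigma> a"
  have b: "b \<in> {1..2*k}" "\<sigma> b = a"
    unfolding b_def using a permutes_in_image[OF permutes_inv[OF \<sigma>]] permutes_inverses(1)[OF \<sigma>]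
    by auto
  have act: "perm_act \<sigma> P a = \<sigma> (P b)" unfolding perm_act_def b_def by simp
  have "perm_act \<sigma> P (\<sigma> (P b)) = \<sigma> (P (P b))"
    unfolding perm_act_def by (simp add: permutes_inverses(2)[OF \<sigma>])
  then show "perm_act \<sigma> P a \<in> {1..2*k} \<and> perm_act \<sigma> P a \<noteq> a \<and>
      perm_act \<sigma> P (perm_act \<sigma> P a) = a"
    using act b pair_partitionD[OF P b(1)] permutes_in_image[OF \<sigma>] permutes_inj[OF \<sigma>]
    by (metis injD)
qed

lemma perm_act_transpose_apply:
  "perm_act (transpose i j) P x = transpose i j (P (transpose i j x))"
  unfolding perm_act_def by simp

lemma perm_act_transpose_transpose: "perm_act (transpose i j) (perm_act (transpose i j) P) = P"
  by (simp add: perm_act_transpose_apply fun_eq_iff)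

definition transversal :: "nat \<Rightarrow> (nat \<Rightarrow> nat) \<Rightarrow> nat set \<Rightarrow> bool" where
  "transversal k P Q \<longleftrightarrow> Q \<subseteq> {1..2*k} \<and> (\<forall>x\<in>{1..2*k}. x \<in> Q \<longleftrightarrow> P x \<notin> Q)"

lemma transversal_card:
  assumes P: "pair_partition k P" and Q: "transversal k P Q"
  shows "card Q = k"
proof -
  have QS: "Q \<subseteq> {1..2*k}" and side: "\<And>x. x \<in> {1..2*k} \<Longrightarrow> x \<in> Q \<longleftrightarrow> P x \<notin> Q"
    using Q unfolding transversal_def by auto
  have "Q \<union> P ` Q = {1..2*k}"
  proof (intro equalityI subsetI)
    fix x assume "x \<in> Q \<union> P ` Q"
    then show "x \<in> {1..2*k}" using QS pair_partitionD(1)[OF P] by blast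
  next
    fix x assume x: "x \<in> {1..2*k}"
    show "x \<in> Q \<union> P ` Q"
    proof (cases "x \<in> Q")
      case False
      then have "P x \<in> Q" using side[OF x] by blast
      then show ?thesis using image_eqI[of x P "P x"] pair_partitionD(2)[OF P x] by simp
    qed simp
  qed
  moreover have "Q \<inter> P ` Q = {}" using QS side by auto
  moreover have "inj_on P Q" using QS pair_partitionD(2)[OF P] by (metis inj_on_inverseI subsetD)
  moreover have "finite Q" using QS finite_subset by blast
  ultimately have "card {1..2*k} = card Q + card Q"
    by (metis card_Un_disjoint card_image finite_imageI)
  then show ?thesis by simp
qed

lemma transversal_of_colouring:
  fixes c :: "nat \<Rightarrow> bool"
  assumes P: "pair_partition k P" and flip: "\<And>x. x \<in> {1..2*k} \<Longrightarrow> c (P x) \<noteq> c x"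
  shows "transversal k P {x \<in> {1..2*k}. c x = b}"
  unfolding transversal_def using flip pair_partitionD(1)[OF P] by auto

lemma transpose_mem_iff:
  assumes "i \<in> Q" "j \<in> Q"
  shows "transpose i j y \<in> Q \<longleftrightarrow> y \<in> Q"
  using assms by (cases "y = i \<or> y = j") auto

lemma transversal_perm_act_transpose:
  assumes Q: "transversal k P Q" and "i \<in> Q" "j \<in> Q"
  shows "transversal k (perm_act (transpose i j) P) Q"
proof -
  note mem = transpose_mem_iff[OF \<open>i \<in> Q\<close> \<open>j \<in> Q\<close>]
  have "transpose i j x \<in> {1..2*k}" if "x \<in> {1..2*k}" for x
    using that \<open>i \<in> Q\<close> \<open>j \<in> Q\<close> Q unfolding transversal_def by (cases "x = i \<or> x = j") auto
  then show ?thesis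
    using Q mem unfolding transversal_def perm_act_transpose_apply by blast
qed

section \<open>Loops as orbits\<close>

text \<open>The first-return map to a common transversal \<open>Q\<close> when travelling along the loops of
  \<open>\<L>(A,B)\<close>: from \<open>x \<in> Q\<close> follow the \<open>A\<close>-pair, then the \<open>B\<close>-pair.\<close>

definition loop_perm :: "(nat \<Rightarrow> nat) \<Rightarrow> (nat \<Rightarrow> nat) \<Rightarrow> nat set \<Rightarrow> nat \<Rightarrow> nat" where
  "loop_perm A B Q x = (if x \<in> Q then B (A x) else x)"

lemma loop_perm_perm_act_transpose:
  assumes Q: "transversal k A Q" and "i \<in> Q" "j \<in> Q"
  shows "loop_perm (perm_act (transpose i j) A) B Q = loop_perm A B Q \<circ> transpose i j"
proof
  fix x
  note mem = transpose_mem_iff[OF \<open>i \<in> Q\<close> \<open>j \<in> Q\<close>]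
  show "loop_perm (perm_act (transpose i j) A) B Q x = (loop_perm A B Q \<circ> transpose i j) x"
  proof (cases "x \<in> Q")
    case True
    then have "A (transpose i j x) \<notin> Q" using Q mem unfolding transversal_def by blast
    then have "A (transpose i j x) \<notin> {i, j}" using \<open>i \<in> Q\<close> \<open>j \<in> Q\<close> by auto
    then show ?thesis using True mem unfolding loop_perm_def perm_act_transpose_apply by simp
  next
    case False
    then have "transpose i j x = x" using \<open>i \<in> Q\<close> \<open>j \<in> Q\<close> by (metis transpose_apply_other)
    then show ?thesis using False unfolding loop_perm_def perm_act_transpose_apply by simp
  qed
qed

lemma L_adj_sym: "sym (L_adj k A B)"
  unfolding L_adj_def sym_def by blast

lemma equiv_rtrancl_restrict:
  assumes "sym L"
  shows "equiv V (L\<^sup>* \<inter> V \<times> V)"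
  using assms by (intro equivI refl_onI sym_Int sym_rtrancl trans_Int trans_rtrancl)
    (auto simp: sym_def trans_def)

lemma card_quotient_eq_card_image:
  assumes R: "equiv V R" and \<phi>: "\<phi> ` Q \<subseteq> V"
    and onto: "\<And>v. v \<in> V \<Longrightarrow> \<exists>x\<in>Q. (v, \<phi> x) \<in> R"
    and kernel: "\<And>x y. x \<in> Q \<Longrightarrow> y \<in> Q \<Longrightarrow> (\<phi> x, \<phi> y) \<in> R \<longleftrightarrow> g x = g y"
  shows "card (V // R) = card (g ` Q)"
proof -
  define F where "F c = R `` {\<phi> (inv_into Q g c)}" for c
  have F: "F (g x) = R `` {\<phi> x}" if "x \<in> Q" for x
  proof -
    have "inv_into Q g (g x) \<in> Q" "g (inv_into Q g (g x)) = g x"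
      using that by (auto intro: inv_into_into f_inv_into_f)
    then show ?thesis
      unfolding F_def using kernel that \<phi> equiv_class_eq_iff[OF R] by blast
  qed
  have "V // R = (\<lambda>x. R `` {\<phi> x}) ` Q"
  proof
    show "V // R \<subseteq> (\<lambda>x. R `` {\<phi> x}) ` Q"
      using onto equiv_class_eq_iff[OF R] by (fastforce elim: quotientE)
    show "(\<lambda>x. R `` {\<phi> x}) ` Q \<subseteq> V // R"
      using \<phi> by (auto intro: quotientI)
  qed
  also have "\<dots> = F ` g ` Q" using F by (simp add: image_image)
  finally have "V // R = F ` g ` Q" .
  moreover have "inj_on F (g ` Q)"
  proof (rule inj_onI)
    fix c d assume "c \<in> g ` Q" "d \<in> g ` Q" "F c = F d"
    then obtain x y where "x \<in> Q" "y \<in> Q" "c = g x" "d = g y" "R `` {\<phi> x} = R `` {\<phi> y}"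
      using F by auto
    then show "c = d" using kernel \<phi> equiv_class_eq_iff[OF R] by blast
  qed
  ultimately show ?thesis by (simp add: card_image)
qed

context
  fixes k :: nat and A B :: "nat \<Rightarrow> nat" and Q :: "nat set"
  assumes A: "pair_partition k A" and B: "pair_partition k B"
    and QA: "transversal k A Q" and QB: "transversal k B Q"
begin

private lemma Q_sub: "Q \<subseteq> {1..2*k}"
  using QA unfolding transversal_def by blast

private lemma Q_finite: "finite Q"
  using finite_subset[OF Q_sub] by simp

private lemma side_A: "x \<in> {1..2*k} \<Longrightarrow> x \<in> Q \<longleftrightarrow> A x \<notin> Q"
  using QA unfolding transversal_def by blast

private lemma side_B: "x \<in> {1..2*k} \<Longrightarrow> x \<in> Q \<longleftrightarrow> B x \<notin> Q"
  using QB unfolding transversal_def by blast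

lemma loop_perm_permutes: "loop_perm A B Q permutes Q"
proof (rule bij_imp_permutes)
  have in_Q: "loop_perm A B Q x \<in> Q" if "x \<in> Q" for x
  proof -
    have x: "x \<in> {1..2*k}" using that Q_sub by blast
    have Ax: "A x \<in> {1..2*k}" using pair_partitionD(1)[OF A x] .
    have "A x \<notin> Q" using side_A[OF x] that by blast
    then show ?thesis using side_B[OF Ax] that unfolding loop_perm_def by simp
  qed
  then have into: "loop_perm A B Q ` Q \<subseteq> Q" by blast
  have "inj_on (loop_perm A B Q) Q"
  proof (rule inj_onI)
    fix x y assume "x \<in> Q" "y \<in> Q" "loop_perm A B Q x = loop_perm A B Q y"
    then have x: "x \<in> {1..2*k}" and y: "y \<in> {1..2*k}" and "B (A x) = B (A y)"
      using Q_sub unfolding loop_perm_def by auto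
    then have "A x = A y"
      using pair_partitionD(2)[OF B] pair_partitionD(1)[OF A] by metis
    then show "x = y" using pair_partitionD(2)[OF A] x y by metis
  qed
  then show "bij_betw (loop_perm A B Q) Q Q"
    using into endo_inj_surj[OF Q_finite into] unfolding bij_betw_def by blast
  show "loop_perm A B Q x = x" if "x \<notin> Q" for x
    using that unfolding loop_perm_def by simp
qed

private lemma loop_perm_permutation: "permutation (loop_perm A B Q)"
  using loop_perm_permutes Q_finite permutation_permutes by blast

private lemma orbit_loop_perm_edge:
  assumes a: "a \<in> {1..2*k}"
  shows "orbit (loop_perm A B Q) ` (Q \<inter> {a, A a}) = orbit (loop_perm A B Q) ` (Q \<inter> {a, B a})"
proof (cases "a \<in> Q")
  case True
  then have "A a \<notin> Q" "B a \<notin> Q" using side_A[OF a] side_B[OF a] by blast+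
  then show ?thesis using True by auto
next
  case False
  then have "A a \<in> Q" "B a \<in> Q" using side_A[OF a] side_B[OF a] by blast+
  moreover have "loop_perm A B Q (A a) = B a"
    using \<open>A a \<in> Q\<close> pair_partitionD(2)[OF A a] unfolding loop_perm_def by simp
  ultimately have "orbit (loop_perm A B Q) (B a) = orbit (loop_perm A B Q) (A a)"
    by (metis permutation_orbit_step loop_perm_permutation)
  then show ?thesis using False \<open>A a \<in> Q\<close> \<open>B a \<in> Q\<close> by auto
qed

text \<open>\<open>case_sum id id v\<close> is the pair labelling the vertex \<open>v\<close>; it meets \<open>Q\<close> in exactly
  one point.\<close>

private lemma orbit_loop_perm_connected:
  assumes "(u, w) \<in> (L_adj k A B)\<^sup>*"
  shows "orbit (loop_perm A B Q) ` (Q \<inter> case_sum id id u)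
       = orbit (loop_perm A B Q) ` (Q \<inter> case_sum id id w)"
  using assms
proof induction
  case (step w z)
  define I where "I v = orbit (loop_perm A B Q) ` (Q \<inter> case_sum id id v)" for v
  have "I (Inl {a, A a}) = I (Inr {a, B a})" if "a \<in> {1..2*k}" for a
    using orbit_loop_perm_edge[OF that] unfolding I_def by simp
  then have "I w = I z" using step.hyps(2) unfolding L_adj_def by auto
  then show ?case using step.IH unfolding I_def by simp
qed simp

private lemma L_vertex_reaches_Q:
  assumes "v \<in> L_vertices k A B"
  obtains x where "x \<in> Q" "(v, Inl {x, A x}) \<in> (L_adj k A B)\<^sup>*"
proof -
  obtain a where a: "a \<in> {1..2*k}" and v: "v = Inl {a, A a} \<or> v = Inr {a, B a}"
    using assms unfolding L_vertices_def by blast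
  have "(Inr {a, B a}, Inl {a, A a}) \<in> L_adj k A B" using a unfolding L_adj_def by blast
  then have va: "(v, Inl {a, A a}) \<in> (L_adj k A B)\<^sup>*" using v by auto
  show ?thesis
  proof (cases "a \<in> Q")
    case False
    then have "A a \<in> Q" and "{a, A a} = {A a, A (A a)}"
      using side_A[OF a] pair_partitionD(2)[OF A a] by auto
    then show ?thesis using that va by metis
  qed (use that va in blast)
qed

private lemma loop_perm_connected:
  assumes "x \<in> Q"
  shows "(Inl {x, A x}, Inl {loop_perm A B Q x, A (loop_perm A B Q x)}) \<in> (L_adj k A B)\<^sup>*"
proof -
  have x: "x \<in> {1..2*k}" using assms Q_sub by blast
  define a where "a = A x"
  have a: "a \<in> {1..2*k}" "{a, A a} = {x, A x}" "B a \<in> {1..2*k}"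
    using pair_partitionD[OF A x] pair_partitionD(1)[OF B] unfolding a_def by auto
  have "(Inl {a, A a}, Inr {a, B a}) \<in> L_adj k A B"
    using a(1) unfolding L_adj_def by blast
  moreover have "(Inr {B a, B (B a)}, Inl {B a, A (B a)}) \<in> L_adj k A B"
    using a(3) unfolding L_adj_def by blast
  moreover have "{B a, B (B a)} = {a, B a}"
    using pair_partitionD(2)[OF B a(1)] by (simp add: insert_commute)
  ultimately have "(Inl {x, A x}, Inl {B a, A (B a)}) \<in> (L_adj k A B)\<^sup>*"
    using a(2) by (metis converse_rtrancl_into_rtrancl r_into_rtrancl)
  then show ?thesis
    using assms unfolding loop_perm_def a_def by simp
qed

private lemma connected_of_orbit:
  assumes "x \<in> Q" and "y \<in> orbit (loop_perm A B Q) x"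
  shows "(Inl {x, A x}, Inl {y, A y}) \<in> (L_adj k A B)\<^sup>*"
  using assms(2)
proof induction
  case base
  show ?case using loop_perm_connected[OF assms(1)] .
next
  case (step y)
  then have "y \<in> Q" using permutes_orbit_subset[OF loop_perm_permutes assms(1)] by blast
  then show ?case using step.IH loop_perm_connected rtrancl_trans by metis
qed

lemma num_loops_eq_card_orbits: "num_loops k A B = card (orbit (loop_perm A B Q) ` Q)"
  unfolding num_loops_def
proof (rule card_quotient_eq_card_image)
  let ?\<rho> = "loop_perm A B Q" and ?L = "L_adj k A B" and ?V = "L_vertices k A B"
  show "equiv ?V (?L\<^sup>* \<inter> ?V \<times> ?V)" by (rule equiv_rtrancl_restrict[OF L_adj_sym])
  show black: "(\<lambda>x. Inl {x, A x}) ` Q \<subseteq> ?V"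
    using Q_sub unfolding L_vertices_def by blast
  show "\<exists>x\<in>Q. (v, Inl {x, A x}) \<in> ?L\<^sup>* \<inter> ?V \<times> ?V" if "v \<in> ?V" for v
    using L_vertex_reaches_Q[OF that] black that by blast
  fix x y assume x: "x \<in> Q" and y: "y \<in> Q"
  have single: "Q \<inter> {z, A z} = {z}" if "z \<in> Q" for z
    using that side_A[of z] Q_sub by blast
  show "(Inl {x, A x}, Inl {y, A y}) \<in> ?L\<^sup>* \<inter> ?V \<times> ?V \<longleftrightarrow> orbit ?\<rho> x = orbit ?\<rho> y"
  proof
    assume "(Inl {x, A x}, Inl {y, A y}) \<in> ?L\<^sup>* \<inter> ?V \<times> ?V"
    then show "orbit ?\<rho> x = orbit ?\<rho> y"
      using orbit_loop_perm_connected single[OF x] single[OF y] by fastforce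
  next
    assume "orbit ?\<rho> x = orbit ?\<rho> y"
    then have "y \<in> orbit ?\<rho> x"
      using permutation_self_in_orbit[OF loop_perm_permutation, of y] by simp
    then show "(Inl {x, A x}, Inl {y, A y}) \<in> ?L\<^sup>* \<inter> ?V \<times> ?V"
      using connected_of_orbit[OF x] black x y by blast
  qed
qed

lemma num_loops_le: "num_loops k A B \<le> k"
  using num_loops_eq_card_orbits card_image_le[OF Q_finite]
    transversal_card[OF A QA] by metis

end

lemma minus_one_power_adjacent:
  assumes "a \<le> k" "b \<le> k" "a + 1 = b \<or> b + 1 = a"
  shows "(-1::int) ^ (k - a) + (-1) ^ (k - b) = 0"
proof -
  from assms consider "k - a = Suc (k - b)" | "k - b = Suc (k - a)" by linarith
  then show ?thesis by cases simp_all
qed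

lemma loop_sign_perm_act_transpose:
  assumes A: "pair_partition k A" and B: "pair_partition k B"
    and QA: "transversal k A Q" and QB: "transversal k B Q"
    and "i \<in> Q" "j \<in> Q" "i \<noteq> j"
  shows "loop_sign k A B + loop_sign k (perm_act (transpose i j) A) B = 0"
proof -
  let ?A' = "perm_act (transpose i j) A"
  have Q: "Q \<subseteq> {1..2*k}" using QA unfolding transversal_def by blast
  have A': "pair_partition k ?A'"
    using pair_partition_perm_act[OF A permutes_swap_id] \<open>i \<in> Q\<close> \<open>j \<in> Q\<close> Q by blast
  have QA': "transversal k ?A' Q"
    by (rule transversal_perm_act_transpose[OF QA \<open>i \<in> Q\<close> \<open>j \<in> Q\<close>])
  have "num_loops k ?A' B = card (orbit (loop_perm A B Q \<circ> transpose i j) ` Q)"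
    using num_loops_eq_card_orbits[OF A' B QA' QB]
      loop_perm_perm_act_transpose[OF QA \<open>i \<in> Q\<close> \<open>j \<in> Q\<close>] by simp
  then have "num_loops k A B + 1 = num_loops k ?A' B \<or> num_loops k ?A' B + 1 = num_loops k A B"
    using card_orbits_comp_transpose[OF loop_perm_permutes[OF A B QA QB] finite_subset[OF Q]
        \<open>i \<in> Q\<close> \<open>j \<in> Q\<close> \<open>i \<noteq> j\<close>]
      num_loops_eq_card_orbits[OF A B QA QB] by auto
  then show ?thesis
    unfolding loop_sign_def
    by (rule minus_one_power_adjacent[OF num_loops_le[OF A B QA QB] num_loops_le[OF A' B QA' QB]])
qed

section \<open>Neighbouring boxes\<close>

lemma neighbors_cases:
  assumes "neighbors a b"
  obtains m where "fst a = fst b" "snd a = 2*m+1 \<and> snd b = 2*m+2 \<or> snd a = 2*m+2 \<and> snd b = 2*m+1"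
  using assms unfolding neighbors_def doubleton_eq_iff by blast

lemma neighbors_parity: "neighbors a b \<Longrightarrow> odd (snd b) \<longleftrightarrow> \<not> odd (snd a)"
  by (erule neighbors_cases) auto

lemma neighbors_unique:
  assumes "neighbors a b" "neighbors a c"
  shows "b = c"
proof -
  obtain m n where "fst a = fst b" "fst a = fst c"
    and "snd a = 2*m+1 \<and> snd b = 2*m+2 \<or> snd a = 2*m+2 \<and> snd b = 2*m+1"
    and "snd a = 2*n+1 \<and> snd c = 2*n+2 \<or> snd a = 2*n+2 \<and> snd c = 2*n+1"
    using assms by (elim neighbors_cases)
  then show ?thesis by (simp add: prod_eq_iff) presburger
qed

lemma cond_P0_same_neighbor:
  assumes "cond_P0 k P f" "i \<in> {1..2*k}" "j \<in> {1..2*k}" "f i = f j"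
  shows "f (P i) = f (P j)"
  using assms neighbors_unique unfolding cond_P0_def by metis

lemma conds_cong:
  assumes "f \<circ> P' = f \<circ> P"
  shows "conds k P' S1 S2 f \<longleftrightarrow> conds k P S1 S2 f"
proof -
  have "f (P' x) = f (P x)" for x using assms by (metis comp_apply)
  then show ?thesis unfolding conds_def cond_P0_def cond_P1_def by simp
qed

lemma comp_perm_act_transpose:
  assumes "f i = f j" "f (P i) = f (P j)"
  shows "f \<circ> perm_act (transpose i j) P = f \<circ> P"
proof
  fix x
  have "f (transpose i j y) = f y" for y
    using assms(1) by (cases "y = i \<or> y = j") auto
  then have "f (perm_act (transpose i j) P x) = f (P (transpose i j x))"
    unfolding perm_act_transpose_apply by simp
  also have "\<dots> = f (P x)"
    using assms(2) by (cases "x = i \<or> x = j") auto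
  finally show "(f \<circ> perm_act (transpose i j) P) x = (f \<circ> P) x" by simp
qed

lemma conds_perm_act_transpose_iff:
  assumes "i \<in> {1..2*k}" "j \<in> {1..2*k}" "f i = f j"
  shows "conds k S0 S1 S2 f \<longleftrightarrow> conds k (perm_act (transpose i j) S0) S1 S2 f"
proof -
  let ?S0' = "perm_act (transpose i j) S0"
  consider "cond_P0 k S0 f" | "cond_P0 k ?S0' f" | "\<not> cond_P0 k S0 f" "\<not> cond_P0 k ?S0' f"
    by blast
  then show ?thesis
  proof cases
    case 1
    then show ?thesis
      using conds_cong comp_perm_act_transpose cond_P0_same_neighbor assms by metis
  next
    case 2
    then have "f \<circ> perm_act (transpose i j) ?S0' = f \<circ> ?S0'"
      using comp_perm_act_transpose cond_P0_same_neighbor assms by metis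
    then show ?thesis
      using conds_cong unfolding perm_act_transpose_transpose by metis
  qed (simp add: conds_def)
qed

theorem lemma3p8:
  fixes k :: nat and S0 S1 S2 :: "nat \<Rightarrow> nat" and lam :: "nat list"
    and f :: "nat \<Rightarrow> nat \<times> nat" and i j :: nat
  assumes "pair_partition k S0" and "pair_partition k S1" and "pair_partition k S2"
    and "young_diagram lam"
    and "f ` {1..2*k} \<subseteq> boxes2 lam"
    and "i \<in> {1..2*k}" and "j \<in> {1..2*k}" and "i \<noteq> j" and "f i = f j"
  shows "(conds k S0 S1 S2 f \<longleftrightarrow> conds k (perm_act (transpose i j) S0) S1 S2 f)
       \<and> (conds k S0 S1 S2 f \<longrightarrow>
            loop_sign k S0 S1 + loop_sign k (perm_act (transpose i j) S0) S1 = 0)"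
proof (intro conjI impI)
  show "conds k S0 S1 S2 f \<longleftrightarrow> conds k (perm_act (transpose i j) S0) S1 S2 f"
    using conds_perm_act_transpose_iff assms(6,7,9) .
  assume "conds k S0 S1 S2 f"
  then have P0: "cond_P0 k S0 f" and P1: "cond_P1 k S0 S1 f" unfolding conds_def by auto
  define c where "c x = odd (snd (f x))" for x
  define Q where "Q = {x \<in> {1..2*k}. c x = c i}"
  have flip0: "c (S0 x) \<noteq> c x" if "x \<in> {1..2*k}" for x
    using P0 that neighbors_parity unfolding cond_P0_def c_def by blast
  have flip1: "c (S1 x) \<noteq> c x" if "x \<in> {1..2*k}" for x
    using P1 that flip0[OF pair_partitionD(1)[OF assms(2) that]] unfolding cond_P1_def c_def by auto
  have "transversal k S0 Q"
    unfolding Q_def by (rule transversal_of_colouring[where c = c, OF assms(1) flip0])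
  moreover have "transversal k S1 Q"
    unfolding Q_def by (rule transversal_of_colouring[where c = c, OF assms(2) flip1])
  moreover have "i \<in> Q" "j \<in> Q" using assms(6,7,9) unfolding Q_def c_def by auto
  ultimately show "loop_sign k S0 S1 + loop_sign k (perm_act (transpose i j) S0) S1 = 0"
    using loop_sign_perm_act_transpose assms(1,2,8) by blast
qed

end
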